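(* Let $\mathcal{A}$ be a finite set, $u,v\in\Delta(\mathcal{A})$ probability vectors, and $r:\mathcal{A}\to\mathbb{R}$ a reward function. Consider a preference model $\mathbb{P}_r(y=1|a,a')\in[0,1]$ satisfying $\mathbb{P}_r(y=1|a,a')\ge\frac12$ for all $a,a'\in\mathcal{A}$ with $r(a)\ge r(a')$. Then $$\sum_{a\in\mathcal{A}}\sqrt{u(a)v(a)}\le\min_{\gamma>0}\sqrt{\big(\gamma+2\mathbb{P}_r(v\succ u)\big)\log\frac{1+\gamma}{\gamma}},$$ where $\mathbb{P}_r(v\succ u):=\mathbb{E}_{a\sim v,a'\sim u}[\mathbb{P}_r(y=1|a,a')]$. *)

theory Defs
  imports Complex_Main
begin

definition prob_vec :: "'a set \<Rightarrow> ('a \<Rightarrow> real) \<Rightarrow> bool" where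
  "prob_vec A u \<longleftrightarrow> (\<forall>a\<in>A. 0 \<le> u a) \<and> (\<Sum>a\<in>A. u a) = 1"

definition pref_prob :: "'a set \<Rightarrow> ('a \<Rightarrow> 'a \<Rightarrow> real) \<Rightarrow> ('a \<Rightarrow> real) \<Rightarrow> ('a \<Rightarrow> real) \<Rightarrow> real" where
  "pref_prob A P v u = (\<Sum>a\<in>A. \<Sum>a'\<in>A. v a * u a' * P a a')"

end

theory Submission
  imports Defs "HOL-Analysis.Convex"
begin

text \<open>
  Write \<open>V(a)\<close> for the \<open>v\<close>-mass of the actions whose reward is at least \<open>r a\<close>.
  Splitting \<open>sqrt (u a * v a)\<close> as \<open>sqrt (u a * (\<gamma> + V a)) * sqrt (v a / (\<gamma> + V a))\<close>,
  Cauchy-Schwarz bounds the square of the left-hand side by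
  \<open>(\<Sum>a. u a * (\<gamma> + V a)) * (\<Sum>a. v a / (\<gamma> + V a))\<close>.
  The first factor is at most \<open>\<gamma> + 2 P(v \<succ> u)\<close>, since \<open>P\<close> is at least \<open>1/2\<close> on every pair
  counted by \<open>V\<close>. The second is a Riemann sum for \<open>\<integral>\<^sub>0\<^sup>1 dt / (\<gamma> + t)\<close>: peeling off
  the action of least reward and using \<open>ln x - ln y \<le> (x - y) / y\<close> shows by induction
  that it is at most \<open>ln ((1 + \<gamma>) / \<gamma>)\<close>.
\<close>

definition upper_mass :: "'a set \<Rightarrow> ('a \<Rightarrow> 'b::linorder) \<Rightarrow> ('a \<Rightarrow> real) \<Rightarrow> 'a \<Rightarrow> real" where
  "upper_mass A r v a = (\<Sum>b\<in>{b\<in>A. r a \<le> r b}. v b)"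

lemma upper_mass_nonneg:
  assumes "\<forall>b\<in>A. 0 \<le> v b"
  shows "0 \<le> upper_mass A r v a"
  unfolding upper_mass_def using assms by (auto intro: sum_nonneg)

lemma upper_mass_mono:
  assumes "finite A" "B \<subseteq> A" "\<forall>b\<in>A. 0 \<le> v b"
  shows "upper_mass B r v a \<le> upper_mass A r v a"
  unfolding upper_mass_def using assms by (intro sum_mono2) auto

lemma upper_mass_of_min:
  assumes "\<forall>b\<in>A. r m \<le> r b"
  shows "upper_mass A r v m = sum v A"
  unfolding upper_mass_def using assms by (intro sum.cong) auto

lemma sum_div_upper_mass_le_ln:
  fixes v :: "'a \<Rightarrow> real" and r :: "'a \<Rightarrow> 'b::linorder"
  assumes "finite B" "\<forall>a\<in>B. 0 \<le> v a" "0 < \<gamma>"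
  shows "(\<Sum>a\<in>B. v a / (\<gamma> + upper_mass B r v a)) \<le> ln (\<gamma> + sum v B) - ln \<gamma>"
  using assms(1,2)
proof (induction B rule: finite_remove_induct)
  case empty
  then show ?case by simp
next
  case (remove A)
  obtain m where m: "m \<in> A" "\<forall>b\<in>A. r m \<le> r b"
  proof -
    have "Min (r ` A) \<in> r ` A" using remove(1,2) by simp
    then obtain m where "m \<in> A" "r m = Min (r ` A)" by auto
    then show ?thesis using that remove(1) by simp
  qed
  define A' where "A' = A - {m}"
  note nonneg = remove.prems
  have IH: "(\<Sum>a\<in>A'. v a / (\<gamma> + upper_mass A' r v a)) \<le> ln (\<gamma> + sum v A') - ln \<gamma>"
    using remove(4)[OF m(1)] nonneg unfolding A'_def by auto
  have sum_A: "sum v A = v m + sum v A'"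
    unfolding A'_def using remove(1) m(1) by (simp add: sum.remove)
  have "0 \<le> v m" "0 \<le> sum v A'"
    using nonneg m(1) unfolding A'_def by (auto intro: sum_nonneg)
  then have pos': "0 < \<gamma> + sum v A'" and pos: "0 < \<gamma> + sum v A"
    using sum_A assms(3) by linarith+
  have peel: "v m / (\<gamma> + sum v A) \<le> ln (\<gamma> + sum v A) - ln (\<gamma> + sum v A')"
    using ln_diff_le[OF pos' pos] sum_A by (simp add: diff_divide_distrib)
  have shrink: "v a / (\<gamma> + upper_mass A r v a) \<le> v a / (\<gamma> + upper_mass A' r v a)"
    if "a \<in> A'" for a
  proof (rule divide_left_mono)
    show "\<gamma> + upper_mass A' r v a \<le> \<gamma> + upper_mass A r v a"
      unfolding A'_def by (intro add_left_mono upper_mass_mono[OF remove(1) _ nonneg]) auto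
    show "0 < (\<gamma> + upper_mass A r v a) * (\<gamma> + upper_mass A' r v a)"
      using upper_mass_nonneg[OF nonneg] upper_mass_nonneg[of A' v] nonneg assms(3)
      unfolding A'_def by (auto intro!: mult_pos_pos add_pos_nonneg)
  qed (use nonneg that A'_def in auto)
  have "(\<Sum>a\<in>A. v a / (\<gamma> + upper_mass A r v a))
      = v m / (\<gamma> + sum v A) + (\<Sum>a\<in>A'. v a / (\<gamma> + upper_mass A r v a))"
    unfolding A'_def using remove(1) m by (simp add: sum.remove upper_mass_of_min)
  also have "\<dots> \<le> v m / (\<gamma> + sum v A) + (\<Sum>a\<in>A'. v a / (\<gamma> + upper_mass A' r v a))"
    using sum_mono[of A' _ _, OF shrink] by simp
  finally show ?case
    using IH peel by linarith
qed

lemma sum_sqrt_mult_squared_le: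
  fixes u v w :: "'a \<Rightarrow> real"
  assumes "\<forall>a\<in>A. 0 \<le> u a" "\<forall>a\<in>A. 0 \<le> v a" "\<forall>a\<in>A. 0 < w a"
  shows "(\<Sum>a\<in>A. sqrt (u a * v a))\<^sup>2 \<le> (\<Sum>a\<in>A. u a * w a) * (\<Sum>a\<in>A. v a / w a)"
proof -
  have "sqrt (u a * v a) = sqrt (u a * w a) * sqrt (v a / w a)"
    and "(sqrt (u a * w a))\<^sup>2 = u a * w a" and "(sqrt (v a / w a))\<^sup>2 = v a / w a"
    if "a \<in> A" for a
    using assms that by (auto simp: real_sqrt_mult[symmetric] less_imp_le)
  then show ?thesis
    using Cauchy_Schwarz_ineq_sum[of "\<lambda>a. sqrt (u a * w a)" "\<lambda>a. sqrt (v a / w a)" A]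
    by (simp cong: sum.cong)
qed

lemma sum_upper_mass_le_pref_prob:
  fixes r :: "'a \<Rightarrow> 'b::linorder"
  assumes "finite A" "\<forall>a\<in>A. 0 \<le> u a" "\<forall>a\<in>A. 0 \<le> v a"
    and "\<And>a a'. a \<in> A \<Longrightarrow> a' \<in> A \<Longrightarrow> 0 \<le> P a a'"
    and "\<And>a a'. a \<in> A \<Longrightarrow> a' \<in> A \<Longrightarrow> r a \<ge> r a' \<Longrightarrow> P a a' \<ge> 1/2"
  shows "(\<Sum>a\<in>A. u a * upper_mass A r v a) \<le> 2 * pref_prob A P v u"
proof -
  have pair_le: "u a * (if r a \<le> r b then v b else 0) \<le> 2 * (v b * u a * P b a)"
    if "a \<in> A" "b \<in> A" for a b
  proof -
    have mass: "0 \<le> v b * u a" and "0 \<le> P b a"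
      using assms(2,3,4) that by simp_all
    show ?thesis
    proof (cases "r a \<le> r b")
      case True
      then have half: "1/2 \<le> P b a" using assms(5) that by simp
      show ?thesis using True mult_left_mono[OF half mass] by (simp add: algebra_simps)
    qed (use mass \<open>0 \<le> P b a\<close> in simp)
  qed
  have "(\<Sum>a\<in>A. u a * upper_mass A r v a) = (\<Sum>a\<in>A. \<Sum>b\<in>A. u a * (if r a \<le> r b then v b else 0))"
    unfolding upper_mass_def
    by (simp add: sum_distrib_left sum.inter_filter[OF assms(1)] if_distrib cong: if_cong)
  also have "\<dots> \<le> (\<Sum>a\<in>A. \<Sum>b\<in>A. 2 * (v b * u a * P b a))"
    by (intro sum_mono pair_le)
  also have "\<dots> = 2 * pref_prob A P v u"
    unfolding pref_prob_def by (subst sum.swap) (simp add: sum_distrib_left)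
  finally show ?thesis .
qed

lemma sum_sqrt_le_sqrt_pref_prob_ln:
  fixes r :: "'a \<Rightarrow> 'b::linorder"
  assumes "finite A" "prob_vec A u" "prob_vec A v" "0 < \<gamma>"
    and "\<And>a a'. a \<in> A \<Longrightarrow> a' \<in> A \<Longrightarrow> 0 \<le> P a a'"
    and "\<And>a a'. a \<in> A \<Longrightarrow> a' \<in> A \<Longrightarrow> r a \<ge> r a' \<Longrightarrow> P a a' \<ge> 1/2"
  shows "(\<Sum>a\<in>A. sqrt (u a * v a)) \<le> sqrt ((\<gamma> + 2 * pref_prob A P v u) * ln ((1 + \<gamma>) / \<gamma>))"
proof -
  have u: "\<forall>a\<in>A. 0 \<le> u a" "sum u A = 1" and v: "\<forall>a\<in>A. 0 \<le> v a" "sum v A = 1"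
    using assms(2,3) unfolding prob_vec_def by auto
  let ?V = "upper_mass A r v"
  have pos: "\<forall>a\<in>A. 0 < \<gamma> + ?V a"
    using upper_mass_nonneg[OF v(1)] assms(4) by (auto intro!: add_pos_nonneg)
  have first_nonneg: "0 \<le> (\<Sum>a\<in>A. u a * (\<gamma> + ?V a))"
    using u(1) pos by (auto intro!: sum_nonneg)
  have "(\<Sum>a\<in>A. u a * (\<gamma> + ?V a)) = \<gamma> + (\<Sum>a\<in>A. u a * ?V a)"
    using u(2) by (simp add: distrib_left sum.distrib flip: sum_distrib_right)
  also have "\<dots> \<le> \<gamma> + 2 * pref_prob A P v u"
    using sum_upper_mass_le_pref_prob[OF assms(1) u(1) v(1) assms(5,6)] by simp
  finally have first: "(\<Sum>a\<in>A. u a * (\<gamma> + ?V a)) \<le> \<gamma> + 2 * pref_prob A P v u" .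
  have second: "(\<Sum>a\<in>A. v a / (\<gamma> + ?V a)) \<le> ln ((1 + \<gamma>) / \<gamma>)"
    using sum_div_upper_mass_le_ln[OF assms(1) v(1) assms(4), of r] v(2) assms(4)
    by (simp add: ln_div add.commute)
  have "(\<Sum>a\<in>A. sqrt (u a * v a))\<^sup>2 \<le> (\<Sum>a\<in>A. u a * (\<gamma> + ?V a)) * (\<Sum>a\<in>A. v a / (\<gamma> + ?V a))"
    using sum_sqrt_mult_squared_le[OF u(1) v(1) pos] .
  also have "\<dots> \<le> (\<gamma> + 2 * pref_prob A P v u) * ln ((1 + \<gamma>) / \<gamma>)"
    using first second first_nonneg v(1) pos
    by (intro mult_mono) (auto intro!: sum_nonneg divide_nonneg_pos)
  finally show ?thesis
    using u(1) v(1) by (intro real_le_rsqrt) (auto intro: sum_nonneg)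
qed

theorem lemmaG1:
  fixes A :: "'a set" and u v :: "'a \<Rightarrow> real" and r :: "'a \<Rightarrow> real"
    and P :: "'a \<Rightarrow> 'a \<Rightarrow> real"
  assumes "finite A"
    and "prob_vec A u" and "prob_vec A v"
    and "\<And>a a'. a \<in> A \<Longrightarrow> a' \<in> A \<Longrightarrow> 0 \<le> P a a' \<and> P a a' \<le> 1"
    and "\<And>a a'. a \<in> A \<Longrightarrow> a' \<in> A \<Longrightarrow> r a \<ge> r a' \<Longrightarrow> P a a' \<ge> 1/2"
  shows "(\<Sum>a\<in>A. sqrt (u a * v a))
           \<le> (INF \<gamma>\<in>{0<..}. sqrt ((\<gamma> + 2 * pref_prob A P v u) * ln ((1 + \<gamma>) / \<gamma>)))"
proof (rule cINF_greatest)
  fix \<gamma> :: real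
  assume "\<gamma> \<in> {0<..}"
  then show "(\<Sum>a\<in>A. sqrt (u a * v a)) \<le> sqrt ((\<gamma> + 2 * pref_prob A P v u) * ln ((1 + \<gamma>) / \<gamma>))"
    using assms by (intro sum_sqrt_le_sqrt_pref_prob_ln) auto
qed simp

end
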